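(* Fix $l\in[r]$. Let $|\Psi_{l-1}\rangle=F_{\beta_{l-1}}(H)|\Psi\rangle/\|F_{\beta_{l-1}}(H)|\Psi\rangle\|$ and $|\Psi_l\rangle=F_{\beta_l}(H)|\Psi\rangle/\|F_{\beta_l}(H)|\Psi\rangle\|$ be the ideal input and output states of the $l$-th fragment, and let the actual input be $|\tilde\Psi_{l-1}\rangle=|\Psi_{l-1}\rangle+|\Xi_{l-1}\rangle$ with $\varepsilon_{l-1}:=\||\Xi_{l-1}\rangle\|$. Let $U$ be an $(\varepsilon'_l,\alpha_l)$-block-encoding of $F_{\Delta\beta_l}(H)$ with $\|\langle0|U|0\rangle-\alpha_lF_{\Delta\beta_l}(H)\|=\varepsilon'_l$, and write the actual post-selected output as $|\tilde\Psi_l\rangle=\frac{\langle0|U|0\rangle|\tilde\Psi_{l-1}\rangle}{\|\langle0|U|0\rangle|\tilde\Psi_{l-1}\rangle\|}=|\Psi_l\rangle+|\Xi_l\rangle$. If $\varepsilon_{l-1}+\varepsilon'_l\le\varepsilon_l\,\|\alpha_lF_{\Delta\beta_l}(H)|\Psi_{l-1}\rangle\|/2$ and $\varepsilon_l\ll1$, then $\||\Xi_l\rangle\|=\mathcal{O}(\varepsilon_l)$.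
   Context: $H$ is a Hamiltonian with $\|H\|\le1$ and smallest eigenvalue $\lambda_{\min}$; $F_b(H)=e^{-b(H-\lambda_{\min})}$. $|\Psi\rangle$ is a unit vector, $\Delta\beta_1,\dots,\Delta\beta_r>0$, $\beta_0=0$, $\beta_l=\sum_{k\le l}\Delta\beta_k$, $\alpha_l\in(0,1]$. A unitary $U$ on $\mathbb{H}_\mathcal{S}\otimes\mathbb{H}_\mathcal{A}$ is an $(\varepsilon,\alpha)$-block-encoding of $A$ if $\|\alpha A-\langle0|U|0\rangle\|\le\varepsilon$ for some $|0\rangle\in\mathbb{H}_\mathcal{A}$. *)

theory Defs
  imports "HOL-Analysis.Analysis" "Jordan_Normal_Form.Schur_Decomposition" "Jordan_Normal_Form.Char_Poly"
begin

definition vnorm :: "complex vec \<Rightarrow> real" where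
  "vnorm v = sqrt (\<Sum>i<dim_vec v. (cmod (v $ i))\<^sup>2)"

definition normalize_vec :: "complex vec \<Rightarrow> complex vec" where
  "normalize_vec v = complex_of_real (1 / vnorm v) \<cdot>\<^sub>v v"

definition opnorm :: "complex mat \<Rightarrow> real" where
  "opnorm A = Sup {vnorm (A *\<^sub>v v) | v. v \<in> carrier_vec (dim_col A) \<and> vnorm v \<le> 1}"

definition hermitian_mat :: "complex mat \<Rightarrow> bool" where
  "hermitian_mat A \<longleftrightarrow> A \<in> carrier_mat (dim_row A) (dim_row A) \<and> mat_adjoint A = A"

definition unitary_mat :: "complex mat \<Rightarrow> bool" where
  "unitary_mat U \<longleftrightarrow> U \<in> carrier_mat (dim_row U) (dim_row U) \<and>
     mat_adjoint U * U = 1\<^sub>m (dim_row U) \<and> U * mat_adjoint U = 1\<^sub>m (dim_row U)"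

definition mat_exp :: "complex mat \<Rightarrow> complex mat" where
  "mat_exp A = mat (dim_row A) (dim_col A)
     (\<lambda>(i,j). \<Sum>k. (A ^\<^sub>m k) $$ (i,j) / of_nat (fact k))"

text \<open>Smallest eigenvalue of a Hermitian matrix (its eigenvalues are real).\<close>
definition lambda_min :: "complex mat \<Rightarrow> real" where
  "lambda_min H = Min {x::real. eigenvalue H (complex_of_real x)}"

definition F_op :: "real \<Rightarrow> complex mat \<Rightarrow> complex mat" where
  "F_op b H = mat_exp (complex_of_real (- b) \<cdot>\<^sub>m
                 (H - complex_of_real (lambda_min H) \<cdot>\<^sub>m 1\<^sub>m (dim_row H)))"

text \<open>Partial matrix element  <phi| U |phi>  on the ancilla, for U acting on
  C^n (system) tensor C^m (ancilla); basis index of |i> tensor |a> is i*m+a.\<close>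
definition anc_block :: "nat \<Rightarrow> nat \<Rightarrow> complex vec \<Rightarrow> complex mat \<Rightarrow> complex mat" where
  "anc_block n m \<phi> U = mat n n (\<lambda>(i,j).
     \<Sum>a<m. \<Sum>b<m. cnj (\<phi> $ a) * \<phi> $ b * U $$ (i*m + a, j*m + b))"

definition block_encoding :: "nat \<Rightarrow> nat \<Rightarrow> real \<Rightarrow> real \<Rightarrow> complex mat \<Rightarrow> complex mat \<Rightarrow> bool" where
  "block_encoding n m eps alpha A U \<longleftrightarrow> U \<in> carrier_mat (n*m) (n*m) \<and> unitary_mat U \<and>
     (\<exists>\<phi>. \<phi> \<in> carrier_vec m \<and> vnorm \<phi> = 1 \<and>
         opnorm (complex_of_real alpha \<cdot>\<^sub>m A - anc_block n m \<phi> U) \<le> eps)"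

end

theory Submission
  imports Defs
begin

text \<open>Write \<open>B = \<langle>0|U|0\<rangle>\<close>, \<open>A = \<alpha>\<^sub>l F\<^sub>\<Delta>\<^sub>\<beta>\<^sub>l(H)\<close> and \<open>y = A |\<Psi>\<^sub>l\<^sub>-\<^sub>1\<rangle>\<close>. Since
  \<open>F\<^sub>s(H) F\<^sub>t(H) = F\<^sub>s\<^sub>+\<^sub>t(H)\<close> and \<open>F\<^sub>t(H)\<close> is invertible, \<open>y\<close> is a positive multiple of
  \<open>F\<^sub>\<beta>\<^sub>l(H) |\<Psi>\<rangle> \<noteq> 0\<close>, so normalising \<open>y\<close> gives the ideal output \<open>|\<Psi>\<^sub>l\<rangle>\<close>. The unnormalised actual
  output \<open>x = B (|\<Psi>\<^sub>l\<^sub>-\<^sub>1\<rangle> + |\<Xi>\<^sub>l\<^sub>-\<^sub>1\<rangle>)\<close> satisfies \<open>\<parallel>x - y\<parallel> \<le> \<epsilon>'\<^sub>l + \<epsilon>\<^sub>l\<^sub>-\<^sub>1\<close>, because a block of a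
  unitary is a contraction. Normalisation is \<open>2 / \<parallel>y\<parallel>\<close>-Lipschitz at \<open>y\<close>, so the hypothesis gives
  \<open>\<parallel>\<Xi>\<^sub>l\<parallel> \<le> 2 (\<epsilon>\<^sub>l\<^sub>-\<^sub>1 + \<epsilon>'\<^sub>l) / \<parallel>y\<parallel> \<le> \<epsilon>\<^sub>l\<close>: the claim holds with \<open>C = 1\<close> and any \<open>c\<close>.\<close>

section \<open>Euclidean and operator norms\<close>

lemma vnorm_eq_L2_set: "vnorm v = L2_set (\<lambda>i. cmod (v $ i)) {..<dim_vec v}"
  unfolding vnorm_def L2_set_def by simp

lemma vnorm_nonneg: "0 \<le> vnorm v"
  unfolding vnorm_def by (auto intro: sum_nonneg)

lemma vnorm_power2: "(vnorm v)\<^sup>2 = (\<Sum>i<dim_vec v. (cmod (v $ i))\<^sup>2)"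
  unfolding vnorm_def by (simp add: sum_nonneg)

lemma vnorm_power2_complex: "complex_of_real ((vnorm v)\<^sup>2) = (\<Sum>i<dim_vec v. cnj (v $ i) * v $ i)"
  unfolding vnorm_power2 of_real_sum
  by (intro sum.cong refl) (metis complex_norm_square mult.commute of_real_power)

lemma vnorm_zero_vec [simp]: "vnorm (0\<^sub>v n) = 0"
  unfolding vnorm_def by simp

lemma norm_index_le_vnorm: "i < dim_vec v \<Longrightarrow> cmod (v $ i) \<le> vnorm v"
  unfolding vnorm_eq_L2_set by (rule member_le_L2_set) auto

lemma vnorm_eq_zeroD: "vnorm v = 0 \<Longrightarrow> v = 0\<^sub>v (dim_vec v)"
  using norm_index_le_vnorm[of _ v] by (intro eq_vecI) force+

lemma vnorm_smult: "vnorm (c \<cdot>\<^sub>v v) = cmod c * vnorm v"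
proof -
  have "vnorm (c \<cdot>\<^sub>v v) = L2_set (\<lambda>i. cmod c * cmod (v $ i)) {..<dim_vec v}"
    unfolding vnorm_eq_L2_set by (auto intro!: L2_set_cong simp: norm_mult)
  also have "\<dots> = cmod c * vnorm v"
    by (simp add: L2_set_right_distrib vnorm_eq_L2_set)
  finally show ?thesis .
qed

lemma vnorm_add_le:
  assumes "dim_vec u = dim_vec v"
  shows "vnorm (u + v) \<le> vnorm u + vnorm v"
proof -
  have "vnorm (u + v) = L2_set (\<lambda>i. cmod ((u + v) $ i)) {..<dim_vec v}"
    using assms by (simp add: vnorm_eq_L2_set)
  also have "\<dots> \<le> L2_set (\<lambda>i. cmod (u $ i) + cmod (v $ i)) {..<dim_vec v}"
    by (rule L2_set_mono) (auto simp: norm_triangle_ineq)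
  also have "\<dots> \<le> vnorm u + vnorm v"
    using assms by (simp add: vnorm_eq_L2_set L2_set_triangle_ineq)
  finally show ?thesis .
qed

lemma vnorm_minus_commute:
  assumes "dim_vec u = dim_vec v"
  shows "vnorm (u - v) = vnorm (v - u)"
proof -
  have "v - u = (-1) \<cdot>\<^sub>v (u - v)"
    using assms by (intro eq_vecI) auto
  then show ?thesis by (simp add: vnorm_smult)
qed

lemma abs_vnorm_diff_le:
  assumes "dim_vec u = dim_vec v"
  shows "\<bar>vnorm u - vnorm v\<bar> \<le> vnorm (u - v)"
proof -
  have "u = (u - v) + v" "v = (v - u) + u"
    using assms by (auto intro: eq_vecI)
  then have "vnorm u \<le> vnorm (u - v) + vnorm v" "vnorm v \<le> vnorm (v - u) + vnorm u"
    using vnorm_add_le[of "u - v" v] vnorm_add_le[of "v - u" u] assms by simp_all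
  then show ?thesis
    using vnorm_minus_commute[OF assms] by linarith
qed

lemma vnorm_normalize_vec_le: "vnorm (normalize_vec v) \<le> 1"
  unfolding normalize_vec_def vnorm_smult using vnorm_nonneg[of v]
  by (cases "vnorm v = 0") (auto simp: norm_divide)

lemma normalize_vec_smult_pos:
  assumes "c > 0"
  shows "normalize_vec (complex_of_real c \<cdot>\<^sub>v v) = normalize_vec v"
  unfolding normalize_vec_def vnorm_smult using assms by (intro eq_vecI) auto

text \<open>The decomposition in the proof stays valid for \<open>x = 0\<close>, where \<open>1 / vnorm x = 0\<close>.\<close>
lemma vnorm_normalize_vec_diff_le:
  assumes dim: "dim_vec x = dim_vec y" and y: "vnorm y > 0"
  shows "vnorm (normalize_vec x - normalize_vec y) \<le> 2 * vnorm (x - y) / vnorm y"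
proof -
  have split: "normalize_vec x - normalize_vec y =
      complex_of_real (1 / vnorm y) \<cdot>\<^sub>v (x - y) + complex_of_real (1 / vnorm x - 1 / vnorm y) \<cdot>\<^sub>v x"
    using dim unfolding normalize_vec_def by (intro eq_vecI) (auto simp: algebra_simps)
  have scale: "\<bar>1 / vnorm x - 1 / vnorm y\<bar> * vnorm x \<le> vnorm (x - y) / vnorm y"
  proof (cases "vnorm x = 0")
    case False
    then have "\<bar>1 / vnorm x - 1 / vnorm y\<bar> * vnorm x = \<bar>vnorm x - vnorm y\<bar> / vnorm y"
      using y vnorm_nonneg[of x] by (simp add: field_simps abs_mult)
    also have "\<dots> \<le> vnorm (x - y) / vnorm y"
      using abs_vnorm_diff_le[OF dim] y by (simp add: divide_right_mono)
    finally show ?thesis .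
  qed (use y vnorm_nonneg[of "x - y"] in simp)
  have "vnorm (normalize_vec x - normalize_vec y)
      \<le> vnorm (complex_of_real (1 / vnorm y) \<cdot>\<^sub>v (x - y))
        + vnorm (complex_of_real (1 / vnorm x - 1 / vnorm y) \<cdot>\<^sub>v x)"
    unfolding split using dim by (intro vnorm_add_le) simp
  also have "\<dots> = \<bar>1 / vnorm y\<bar> * vnorm (x - y) + \<bar>1 / vnorm x - 1 / vnorm y\<bar> * vnorm x"
    by (simp only: vnorm_smult norm_of_real)
  also have "\<dots> \<le> vnorm (x - y) / vnorm y + vnorm (x - y) / vnorm y"
    using scale y by simp
  finally show ?thesis by simp
qed

lemma mult_mat_vec_index_sum:
  "i < dim_row A \<Longrightarrow> dim_vec v = dim_col A \<Longrightarrow> (A *\<^sub>v v) $ i = (\<Sum>j<dim_col A. A $$ (i, j) * v $ j)"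
  by (auto simp: scalar_prod_def atLeast0LessThan intro!: sum.cong)

lemma bdd_above_opnorm_set:
  "bdd_above {vnorm (A *\<^sub>v v) | v. v \<in> carrier_vec (dim_col A) \<and> vnorm v \<le> 1}"
proof (rule bdd_aboveI[where M = "\<Sum>i<dim_row A. \<Sum>j<dim_col A. cmod (A $$ (i, j))"], clarify)
  fix v :: "complex vec"
  assume v: "v \<in> carrier_vec (dim_col A)" "vnorm v \<le> 1"
  have row: "cmod ((A *\<^sub>v v) $ i) \<le> (\<Sum>j<dim_col A. cmod (A $$ (i, j)))" if i: "i < dim_row A" for i
  proof -
    have "cmod ((A *\<^sub>v v) $ i) = cmod (\<Sum>j<dim_col A. A $$ (i, j) * v $ j)"
      using i v by (subst mult_mat_vec_index_sum) auto
    also have "\<dots> \<le> (\<Sum>j<dim_col A. cmod (A $$ (i, j) * v $ j))"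
      by (rule norm_sum)
    also have "\<dots> \<le> (\<Sum>j<dim_col A. cmod (A $$ (i, j)))"
    proof (rule sum_mono)
      fix j assume "j \<in> {..<dim_col A}"
      then have "cmod (v $ j) \<le> 1"
        using norm_index_le_vnorm[of j v] v by auto
      then show "cmod (A $$ (i, j) * v $ j) \<le> cmod (A $$ (i, j))"
        by (simp add: norm_mult mult_left_le)
    qed
    finally show ?thesis .
  qed
  have "vnorm (A *\<^sub>v v) \<le> (\<Sum>i<dim_row A. cmod ((A *\<^sub>v v) $ i))"
    using L2_set_le_sum_abs[of "\<lambda>i. cmod ((A *\<^sub>v v) $ i)" "{..<dim_row A}"]
    by (simp add: vnorm_eq_L2_set del: index_mult_mat_vec)
  also have "\<dots> \<le> (\<Sum>i<dim_row A. \<Sum>j<dim_col A. cmod (A $$ (i, j)))"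
    using row by (intro sum_mono) simp
  finally show "vnorm (A *\<^sub>v v) \<le> (\<Sum>i<dim_row A. \<Sum>j<dim_col A. cmod (A $$ (i, j)))" .
qed

lemma vnorm_mult_mat_vec_le_opnorm:
  assumes "v \<in> carrier_vec (dim_col A)" "vnorm v \<le> 1"
  shows "vnorm (A *\<^sub>v v) \<le> opnorm A"
  unfolding opnorm_def by (rule cSup_upper[OF _ bdd_above_opnorm_set]) (use assms in auto)

lemma opnorm_nonneg: "0 \<le> opnorm A"
proof -
  have "vnorm (A *\<^sub>v 0\<^sub>v (dim_col A)) \<le> opnorm A"
    by (rule vnorm_mult_mat_vec_le_opnorm) auto
  then show ?thesis
    using vnorm_nonneg order_trans by blast
qed

lemma vnorm_mult_mat_vec_le:
  assumes v: "v \<in> carrier_vec (dim_col A)"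
  shows "vnorm (A *\<^sub>v v) \<le> opnorm A * vnorm v"
proof (cases "vnorm v = 0")
  case True
  then have "A *\<^sub>v v = 0\<^sub>v (dim_row A)"
    using vnorm_eq_zeroD[of v] v by (intro eq_vecI) (auto simp: mult_mat_vec_index_sum)
  then show ?thesis using True by simp
next
  case False
  then have pos: "vnorm v > 0" using vnorm_nonneg[of v] by linarith
  let ?u = "complex_of_real (1 / vnorm v) \<cdot>\<^sub>v v"
  have "vnorm (A *\<^sub>v ?u) \<le> opnorm A"
    using v pos by (intro vnorm_mult_mat_vec_le_opnorm) (auto simp: vnorm_smult norm_divide)
  moreover have "A *\<^sub>v ?u = complex_of_real (1 / vnorm v) \<cdot>\<^sub>v (A *\<^sub>v v)"
    using v by (intro mult_mat_vec) auto
  ultimately show ?thesis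
    using pos by (simp add: vnorm_smult norm_divide pos_divide_le_eq)
qed

section \<open>Post-selection on an ancilla state\<close>

lemma vnorm_isometry_mult_vec:
  assumes U: "U \<in> carrier_mat M N" and iso: "mat_adjoint U * U = 1\<^sub>m N" and w: "w \<in> carrier_vec N"
  shows "vnorm (U *\<^sub>v w) = vnorm w"
proof -
  have ortho: "(\<Sum>i<M. cnj (U $$ (i, k)) * U $$ (i, l)) = (if k = l then 1 else 0)"
    if kl: "k < N" "l < N" for k l
  proof -
    have "(\<Sum>i<M. cnj (U $$ (i, k)) * U $$ (i, l)) = (mat_adjoint U * U) $$ (k, l)"
      using U kl unfolding mat_adjoint_def
      by (auto simp: scalar_prod_def atLeast0LessThan mat_of_rows_index intro!: sum.cong)
    then show ?thesis using iso kl by simp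
  qed
  have diag: "(\<Sum>l<N. cnj (w $ k) * w $ l * (\<Sum>i<M. cnj (U $$ (i, k)) * U $$ (i, l))) = cnj (w $ k) * w $ k"
    if k: "k < N" for k
  proof -
    have "(\<Sum>l<N. cnj (w $ k) * w $ l * (\<Sum>i<M. cnj (U $$ (i, k)) * U $$ (i, l)))
        = (\<Sum>l<N. if k = l then cnj (w $ k) * w $ l else 0)"
      using k by (intro sum.cong refl) (simp add: ortho)
    then show ?thesis using k by simp
  qed
  have "complex_of_real ((vnorm (U *\<^sub>v w))\<^sup>2)
      = (\<Sum>i<M. \<Sum>k<N. \<Sum>l<N. cnj (U $$ (i, k) * w $ k) * (U $$ (i, l) * w $ l))"
    unfolding vnorm_power2_complex using U w
    by (intro sum.cong refl)
      (auto simp: mult_mat_vec_index_sum sum_product cnj_sum simp del: index_mult_mat_vec)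
  also have "\<dots> = (\<Sum>k<N. \<Sum>l<N. \<Sum>i<M. cnj (U $$ (i, k) * w $ k) * (U $$ (i, l) * w $ l))"
    by (rule trans[OF sum.swap], rule sum.cong[OF refl], rule sum.swap)
  also have "\<dots> = (\<Sum>k<N. \<Sum>l<N. cnj (w $ k) * w $ l * (\<Sum>i<M. cnj (U $$ (i, k)) * U $$ (i, l)))"
    by (simp add: sum_distrib_left mult_ac)
  also have "\<dots> = (\<Sum>k<N. cnj (w $ k) * w $ k)"
    by (intro sum.cong refl) (simp add: diag)
  also have "\<dots> = complex_of_real ((vnorm w)\<^sup>2)"
    unfolding vnorm_power2_complex using w by simp
  finally show ?thesis
    using vnorm_nonneg by (metis of_real_eq_iff power2_eq_iff_nonneg)
qed

lemma mult_add_less_mult_nat: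
  assumes "i < n" "a < m"
  shows "i * m + a < n * (m :: nat)"
proof -
  have "i * m + a < Suc i * m" using assms(2) by simp
  also have "\<dots> \<le> n * m" using assms(1) by (intro mult_right_mono) auto
  finally show ?thesis .
qed

text \<open>Index \<open>b + j * dim_vec y\<close> of \<open>kron_vec x y\<close> corresponds to \<open>|j\<rangle> \<otimes> |b\<rangle>\<close>, the ordering
  used by \<^const>\<open>anc_block\<close>.\<close>
definition kron_vec :: "'a :: times vec \<Rightarrow> 'a vec \<Rightarrow> 'a vec" where
  "kron_vec x y = vec (dim_vec x * dim_vec y) (\<lambda>k. x $ (k div dim_vec y) * y $ (k mod dim_vec y))"

lemma dim_kron_vec [simp]: "dim_vec (kron_vec x y) = dim_vec x * dim_vec y"
  unfolding kron_vec_def by simp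

lemma index_kron_vec:
  assumes "j < dim_vec x" "b < dim_vec y"
  shows "kron_vec x y $ (b + j * dim_vec y) = x $ j * y $ b"
  using mult_add_less_mult_nat[OF assms] assms unfolding kron_vec_def by (simp add: add.commute)

lemma vnorm_kron_vec: "vnorm (kron_vec x y) = vnorm x * vnorm y"
proof -
  have "(vnorm (kron_vec x y))\<^sup>2 = (\<Sum>j<dim_vec x. \<Sum>b<dim_vec y. (cmod (kron_vec x y $ (b + j * dim_vec y)))\<^sup>2)"
    unfolding vnorm_power2 by (simp add: sum_mult_product)
  also have "\<dots> = (\<Sum>j<dim_vec x. \<Sum>b<dim_vec y. (cmod (x $ j))\<^sup>2 * (cmod (y $ b))\<^sup>2)"
    by (intro sum.cong refl) (simp add: index_kron_vec norm_mult power_mult_distrib)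
  also have "\<dots> = (vnorm x * vnorm y)\<^sup>2"
    by (simp add: vnorm_power2 power_mult_distrib sum_product)
  finally show ?thesis
    using vnorm_nonneg by (simp add: power2_eq_iff_nonneg)
qed

lemma anc_block_mult_vec_index:
  assumes U: "U \<in> carrier_mat (n * m) (n * m)" and \<phi>: "\<phi> \<in> carrier_vec m"
    and x: "x \<in> carrier_vec n" and i: "i < n"
  shows "(anc_block n m \<phi> U *\<^sub>v x) $ i = (\<Sum>a<m. cnj (\<phi> $ a) * (U *\<^sub>v kron_vec x \<phi>) $ (i * m + a))"
proof -
  have Ux: "(U *\<^sub>v kron_vec x \<phi>) $ (i * m + a)
      = (\<Sum>j<n. \<Sum>b<m. U $$ (i * m + a, j * m + b) * (x $ j * \<phi> $ b))"
    if a: "a < m" for a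
  proof -
    have "(U *\<^sub>v kron_vec x \<phi>) $ (i * m + a) = (\<Sum>k<n * m. U $$ (i * m + a, k) * kron_vec x \<phi> $ k)"
      using U x \<phi> mult_add_less_mult_nat[OF i a]
      by (simp add: mult_mat_vec_index_sum del: index_mult_mat_vec)
    also have "\<dots> = (\<Sum>j<n. \<Sum>b<m. U $$ (i * m + a, b + j * m) * kron_vec x \<phi> $ (b + j * m))"
      by (rule sum_mult_product)
    also have "\<dots> = (\<Sum>j<n. \<Sum>b<m. U $$ (i * m + a, j * m + b) * (x $ j * \<phi> $ b))"
      using index_kron_vec[of _ x _ \<phi>] x \<phi> by (intro sum.cong refl) (auto simp: add.commute)
    finally show ?thesis .
  qed
  have "(anc_block n m \<phi> U *\<^sub>v x) $ i
      = (\<Sum>j<n. \<Sum>a<m. \<Sum>b<m. cnj (\<phi> $ a) * (U $$ (i * m + a, j * m + b) * (x $ j * \<phi> $ b)))"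
    using x i unfolding anc_block_def
    by (simp add: mult_mat_vec_index_sum sum_distrib_left sum_distrib_right mult_ac del: index_mult_mat_vec)
  also have "\<dots> = (\<Sum>a<m. \<Sum>j<n. \<Sum>b<m. cnj (\<phi> $ a) * (U $$ (i * m + a, j * m + b) * (x $ j * \<phi> $ b)))"
    by (rule sum.swap)
  also have "\<dots> = (\<Sum>a<m. cnj (\<phi> $ a) * (U *\<^sub>v kron_vec x \<phi>) $ (i * m + a))"
    by (intro sum.cong refl) (simp add: Ux sum_distrib_left)
  finally show ?thesis .
qed

lemma vnorm_anc_block_mult_vec_le:
  assumes U: "U \<in> carrier_mat (n * m) (n * m)" "mat_adjoint U * U = 1\<^sub>m (n * m)"
    and \<phi>: "\<phi> \<in> carrier_vec m" and x: "x \<in> carrier_vec n"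
  shows "vnorm (anc_block n m \<phi> U *\<^sub>v x) \<le> (vnorm \<phi>)\<^sup>2 * vnorm x"
proof -
  define y where "y = U *\<^sub>v kron_vec x \<phi>"
  define z where "z = anc_block n m \<phi> U *\<^sub>v x"
  have kron: "kron_vec x \<phi> \<in> carrier_vec (n * m)"
    using x \<phi> by (intro carrier_vecI) simp
  have y_carrier: "y \<in> carrier_vec (n * m)"
    unfolding y_def using U(1) kron by (rule mult_mat_vec_carrier)
  have vnorm_y: "vnorm y = vnorm x * vnorm \<phi>"
    unfolding y_def vnorm_isometry_mult_vec[OF U kron] by (rule vnorm_kron_vec)
  have row: "(cmod (z $ i))\<^sup>2 \<le> (vnorm \<phi>)\<^sup>2 * (\<Sum>a<m. (cmod (y $ (a + i * m)))\<^sup>2)"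
    if i: "i < n" for i
  proof -
    let ?Y = "L2_set (\<lambda>a. cmod (y $ (a + i * m))) {..<m}"
    have "cmod (z $ i) \<le> (\<Sum>a<m. cmod (cnj (\<phi> $ a) * y $ (i * m + a)))"
      unfolding z_def anc_block_mult_vec_index[OF U(1) \<phi> x i] y_def by (rule norm_sum)
    also have "\<dots> = (\<Sum>a<m. \<bar>cmod (\<phi> $ a)\<bar> * \<bar>cmod (y $ (a + i * m))\<bar>)"
      by (simp add: norm_mult add.commute)
    also have "\<dots> \<le> vnorm \<phi> * ?Y"
      using L2_set_mult_ineq[of "\<lambda>a. cmod (\<phi> $ a)" "\<lambda>a. cmod (y $ (a + i * m))" "{..<m}"] \<phi>
      by (simp add: vnorm_eq_L2_set)
    finally have "(cmod (z $ i))\<^sup>2 \<le> (vnorm \<phi>)\<^sup>2 * ?Y\<^sup>2"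
      by (metis norm_ge_zero power_mono power_mult_distrib)
    also have "?Y\<^sup>2 = (\<Sum>a<m. (cmod (y $ (a + i * m)))\<^sup>2)"
      unfolding L2_set_def by (simp add: sum_nonneg)
    finally show ?thesis .
  qed
  have "(vnorm z)\<^sup>2 = (\<Sum>i<n. (cmod (z $ i))\<^sup>2)"
    unfolding z_def vnorm_power2 by (simp add: anc_block_def)
  also have "\<dots> \<le> (\<Sum>i<n. (vnorm \<phi>)\<^sup>2 * (\<Sum>a<m. (cmod (y $ (a + i * m)))\<^sup>2))"
    by (rule sum_mono) (simp add: row)
  also have "\<dots> = (vnorm \<phi>)\<^sup>2 * (\<Sum>k<n * m. (cmod (y $ k))\<^sup>2)"
    by (simp only: sum_mult_product sum_distrib_left)
  also have "\<dots> = (vnorm \<phi>)\<^sup>2 * (vnorm y)\<^sup>2"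
    using y_carrier by (simp add: vnorm_power2)
  also have "\<dots> = ((vnorm \<phi>)\<^sup>2 * vnorm x)\<^sup>2"
    by (simp add: vnorm_y power_mult_distrib)
  finally show ?thesis
    unfolding z_def by (rule power2_le_imp_le) (simp add: vnorm_nonneg)
qed

section \<open>The matrix exponential\<close>

lemma pow_mat_add:
  assumes K: "K \<in> carrier_mat N N"
  shows "K ^\<^sub>m p * K ^\<^sub>m q = K ^\<^sub>m (p + q)"
proof (induction q)
  case 0
  then show ?case using K by simp
next
  case (Suc q)
  have "K ^\<^sub>m p * K ^\<^sub>m Suc q = (K ^\<^sub>m p * K ^\<^sub>m q) * K"
    using K by (simp add: assoc_mult_mat[symmetric, of _ N N _ N _ N])
  then show ?case using Suc by simp
qed

lemma pow_mat_smult: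
  fixes c :: complex
  assumes K: "K \<in> carrier_mat N N"
  shows "(c \<cdot>\<^sub>m K) ^\<^sub>m k = c ^ k \<cdot>\<^sub>m K ^\<^sub>m k"
proof (induction k)
  case 0
  then show ?case using K by (auto intro!: eq_matI)
next
  case (Suc k)
  then show ?case
    using K by (auto intro!: eq_matI simp: scalar_prod_def sum_distrib_left mult_ac intro!: sum.cong)
qed

lemma pow_mat_index_bound:
  assumes K: "K \<in> carrier_mat N N"
  obtains M :: real where "M \<ge> 1" "\<And>k i j. i < N \<Longrightarrow> j < N \<Longrightarrow> cmod ((K ^\<^sub>m k) $$ (i, j)) \<le> M ^ k"
proof
  define M where "M = 1 + (\<Sum>p<N. \<Sum>q<N. cmod (K $$ (p, q)))"
  show M1: "M \<ge> 1" unfolding M_def by (auto intro!: sum_nonneg)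
  have col: "(\<Sum>p<N. cmod (K $$ (p, j))) \<le> M" if "j < N" for j
  proof -
    have "(\<Sum>p<N. cmod (K $$ (p, j))) \<le> (\<Sum>p<N. \<Sum>q<N. cmod (K $$ (p, q)))"
      using that by (intro sum_mono member_le_sum) auto
    then show ?thesis unfolding M_def by linarith
  qed
  show "cmod ((K ^\<^sub>m k) $$ (i, j)) \<le> M ^ k" if "i < N" "j < N" for k i j
    using that
  proof (induction k arbitrary: j)
    case 0
    then show ?case using K by auto
  next
    case (Suc k)
    have "cmod ((K ^\<^sub>m Suc k) $$ (i, j)) = cmod (\<Sum>p<N. (K ^\<^sub>m k) $$ (i, p) * K $$ (p, j))"
      using K Suc.prems by (auto simp: scalar_prod_def atLeast0LessThan intro!: arg_cong[where f = cmod] sum.cong)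
    also have "\<dots> \<le> (\<Sum>p<N. cmod ((K ^\<^sub>m k) $$ (i, p)) * cmod (K $$ (p, j)))"
      by (rule order_trans[OF norm_sum]) (simp add: norm_mult)
    also have "\<dots> \<le> (\<Sum>p<N. M ^ k * cmod (K $$ (p, j)))"
      using Suc by (intro sum_mono mult_right_mono) auto
    also have "\<dots> \<le> M ^ k * M"
      using col[OF Suc.prems(2)] M1 by (simp add: sum_distrib_left[symmetric] mult_left_mono)
    finally show ?case by (simp add: mult.commute)
  qed
qed

definition mat_exp_term :: "complex \<Rightarrow> complex mat \<Rightarrow> nat \<Rightarrow> nat \<Rightarrow> nat \<Rightarrow> complex" where
  "mat_exp_term c K k i j = c ^ k * (K ^\<^sub>m k) $$ (i, j) / fact k"

lemma mat_exp_carrier: "mat_exp A \<in> carrier_mat (dim_row A) (dim_col A)"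
  unfolding mat_exp_def by simp

lemma index_mat_exp_smult:
  assumes "K \<in> carrier_mat N N" "i < N" "j < N"
  shows "mat_exp (c \<cdot>\<^sub>m K) $$ (i, j) = (\<Sum>k. mat_exp_term c K k i j)"
  unfolding mat_exp_def mat_exp_term_def using assms by (simp add: pow_mat_smult)

lemma summable_norm_mat_exp_term:
  assumes K: "K \<in> carrier_mat N N" and ij: "i < N" "j < N"
  shows "summable (\<lambda>k. norm (mat_exp_term c K k i j))"
proof -
  obtain M where M: "\<And>k. cmod ((K ^\<^sub>m k) $$ (i, j)) \<le> M ^ k"
    using pow_mat_index_bound[OF K] ij by metis
  show ?thesis
  proof (rule summable_comparison_test'[where N = 0])
    show "summable (\<lambda>k. inverse (fact k) * (cmod c * M) ^ k)"
      by (rule summable_exp)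
    fix k :: nat
    have "norm (norm (mat_exp_term c K k i j)) = cmod c ^ k * cmod ((K ^\<^sub>m k) $$ (i, j)) / fact k"
      unfolding mat_exp_term_def by (simp add: norm_mult norm_divide norm_power)
    also have "\<dots> \<le> cmod c ^ k * M ^ k / fact k"
      using M by (intro divide_right_mono mult_left_mono) auto
    finally show "norm (norm (mat_exp_term c K k i j)) \<le> inverse (fact k) * (cmod c * M) ^ k"
      by (simp add: power_mult_distrib field_simps)
  qed
qed

text \<open>The binomial theorem, applied to the Cauchy product of the entrywise series.\<close>
lemma mat_exp_term_Cauchy_product:
  assumes K: "K \<in> carrier_mat N N" and ij: "i < N" "j < N"
  shows "(\<Sum>p<N. \<Sum>q\<le>k. mat_exp_term a K q i p * mat_exp_term b K (k - q) p j) = mat_exp_term (a + b) K k i j"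
proof -
  have "(\<Sum>p<N. \<Sum>q\<le>k. mat_exp_term a K q i p * mat_exp_term b K (k - q) p j) =
      (\<Sum>q\<le>k. a ^ q * b ^ (k - q) / (fact q * fact (k - q)) *
         (\<Sum>p<N. (K ^\<^sub>m q) $$ (i, p) * (K ^\<^sub>m (k - q)) $$ (p, j)))"
    unfolding mat_exp_term_def by (subst sum.swap) (simp add: sum_distrib_left mult_ac)
  also have "\<dots> = (\<Sum>q\<le>k. a ^ q * b ^ (k - q) / (fact q * fact (k - q)) * (K ^\<^sub>m k) $$ (i, j))"
  proof (intro sum.cong refl)
    fix q assume q: "q \<in> {..k}"
    have "(\<Sum>p<N. (K ^\<^sub>m q) $$ (i, p) * (K ^\<^sub>m (k - q)) $$ (p, j)) = (K ^\<^sub>m q * K ^\<^sub>m (k - q)) $$ (i, j)"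
      using K ij by (auto simp: scalar_prod_def atLeast0LessThan intro!: sum.cong)
    also have "\<dots> = (K ^\<^sub>m k) $$ (i, j)"
      using q by (simp add: pow_mat_add[OF K])
    finally show "a ^ q * b ^ (k - q) / (fact q * fact (k - q)) * (\<Sum>p<N. (K ^\<^sub>m q) $$ (i, p) * (K ^\<^sub>m (k - q)) $$ (p, j))
        = a ^ q * b ^ (k - q) / (fact q * fact (k - q)) * (K ^\<^sub>m k) $$ (i, j)"
      by simp
  qed
  also have "\<dots> = (\<Sum>q\<le>k. of_nat (k choose q) * a ^ q * b ^ (k - q)) / fact k * (K ^\<^sub>m k) $$ (i, j)"
    unfolding sum_distrib_right sum_divide_distrib
    by (intro sum.cong refl) (simp add: binomial_fact field_simps)
  also have "\<dots> = mat_exp_term (a + b) K k i j"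
    unfolding mat_exp_term_def binomial_ring by simp
  finally show ?thesis .
qed

lemma mat_exp_smult_add:
  assumes K: "K \<in> carrier_mat N N"
  shows "mat_exp (a \<cdot>\<^sub>m K) * mat_exp (b \<cdot>\<^sub>m K) = mat_exp ((a + b) \<cdot>\<^sub>m K)"
proof (rule eq_matI)
  have carrier: "mat_exp (c \<cdot>\<^sub>m K) \<in> carrier_mat N N" for c
    using mat_exp_carrier[of "c \<cdot>\<^sub>m K"] K by simp
  show "dim_row (mat_exp (a \<cdot>\<^sub>m K) * mat_exp (b \<cdot>\<^sub>m K)) = dim_row (mat_exp ((a + b) \<cdot>\<^sub>m K))"
    "dim_col (mat_exp (a \<cdot>\<^sub>m K) * mat_exp (b \<cdot>\<^sub>m K)) = dim_col (mat_exp ((a + b) \<cdot>\<^sub>m K))"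
    using carrier[of a] carrier[of b] carrier[of "a + b"] by auto
  fix i j assume "i < dim_row (mat_exp ((a + b) \<cdot>\<^sub>m K))" "j < dim_col (mat_exp ((a + b) \<cdot>\<^sub>m K))"
  then have ij: "i < N" "j < N" using carrier[of "a + b"] by auto
  have product: "(mat_exp (a \<cdot>\<^sub>m K) * mat_exp (b \<cdot>\<^sub>m K)) $$ (i, j) =
      (\<Sum>p<N. (\<Sum>k. mat_exp_term a K k i p) * (\<Sum>k. mat_exp_term b K k p j))"
    using carrier[of a] carrier[of b] ij K
    by (auto simp: scalar_prod_def atLeast0LessThan index_mat_exp_smult intro!: sum.cong)
  have "(\<lambda>k. \<Sum>p<N. \<Sum>q\<le>k. mat_exp_term a K q i p * mat_exp_term b K (k - q) p j) sums
      (\<Sum>p<N. (\<Sum>k. mat_exp_term a K k i p) * (\<Sum>k. mat_exp_term b K k p j))"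
    by (intro sums_sum Cauchy_product_sums) (use summable_norm_mat_exp_term[OF K] ij in auto)
  then show "(mat_exp (a \<cdot>\<^sub>m K) * mat_exp (b \<cdot>\<^sub>m K)) $$ (i, j) = mat_exp ((a + b) \<cdot>\<^sub>m K) $$ (i, j)"
    unfolding product index_mat_exp_smult[OF K ij] mat_exp_term_Cauchy_product[OF K ij]
    by (rule sums_unique)
qed

lemma mat_exp_smult_zero:
  assumes K: "K \<in> carrier_mat N N"
  shows "mat_exp (0 \<cdot>\<^sub>m K) = 1\<^sub>m N"
proof (rule eq_matI)
  show "dim_row (mat_exp (0 \<cdot>\<^sub>m K)) = dim_row (1\<^sub>m N)" "dim_col (mat_exp (0 \<cdot>\<^sub>m K)) = dim_col (1\<^sub>m N)"
    using mat_exp_carrier[of "0 \<cdot>\<^sub>m K"] K by auto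
  fix i j assume "i < dim_row (1\<^sub>m N)" "j < dim_col (1\<^sub>m N)"
  then have ij: "i < N" "j < N" by auto
  have "(\<lambda>k. mat_exp_term 0 K k i j) = (\<lambda>k. if k = 0 then 1\<^sub>m N $$ (i, j) else 0)"
    using K ij by (auto simp: mat_exp_term_def)
  then have "(\<lambda>k. mat_exp_term 0 K k i j) sums 1\<^sub>m N $$ (i, j)"
    using sums_single[of 0 "\<lambda>_. 1\<^sub>m N $$ (i, j)"] by simp
  then show "mat_exp (0 \<cdot>\<^sub>m K) $$ (i, j) = 1\<^sub>m N $$ (i, j)"
    unfolding index_mat_exp_smult[OF K ij] by (rule sums_unique[symmetric])
qed

section \<open>Imaginary-time evolution and one fragment of the algorithm\<close>

lemma F_op_carrier:
  assumes "H \<in> carrier_mat n n"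
  shows "F_op t H \<in> carrier_mat n n"
  using assms mat_exp_carrier[of "complex_of_real (- t) \<cdot>\<^sub>m (H - complex_of_real (lambda_min H) \<cdot>\<^sub>m 1\<^sub>m n)"]
  unfolding F_op_def by simp

lemma F_op_add:
  assumes H: "H \<in> carrier_mat n n"
  shows "F_op s H * F_op t H = F_op (s + t) H"
proof -
  have "H - complex_of_real (lambda_min H) \<cdot>\<^sub>m 1\<^sub>m n \<in> carrier_mat n n"
    by (simp add: minus_carrier_mat)
  from mat_exp_smult_add[OF this, of "complex_of_real (- s)" "complex_of_real (- t)"]
  show ?thesis
    using H unfolding F_op_def by simp
qed

lemma F_op_zero:
  assumes H: "H \<in> carrier_mat n n"
  shows "F_op 0 H = 1\<^sub>m n"
proof -
  have "H - complex_of_real (lambda_min H) \<cdot>\<^sub>m 1\<^sub>m n \<in> carrier_mat n n"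
    by (simp add: minus_carrier_mat)
  from mat_exp_smult_zero[OF this] show ?thesis
    using H unfolding F_op_def by simp
qed

lemma vnorm_F_op_mult_vec_pos:
  assumes H: "H \<in> carrier_mat n n" and v: "v \<in> carrier_vec n" "v \<noteq> 0\<^sub>v n"
  shows "vnorm (F_op t H *\<^sub>v v) > 0"
proof -
  have F: "F_op s H \<in> carrier_mat n n" for s
    using H by (rule F_op_carrier)
  have "F_op (- t) H *\<^sub>v (F_op t H *\<^sub>v v) = (F_op (- t) H * F_op t H) *\<^sub>v v"
    by (rule assoc_mult_mat_vec[symmetric, OF F F v(1)])
  also have "\<dots> = v"
    using v by (simp add: F_op_add[OF H] F_op_zero[OF H])
  finally have "vnorm v = vnorm (F_op (- t) H *\<^sub>v (F_op t H *\<^sub>v v))"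
    by simp
  also have "\<dots> \<le> opnorm (F_op (- t) H) * vnorm (F_op t H *\<^sub>v v)"
    using carrier_matD(2)[OF F] mult_mat_vec_carrier[OF F v(1)] by (intro vnorm_mult_mat_vec_le) simp
  finally have "vnorm v \<le> opnorm (F_op (- t) H) * vnorm (F_op t H *\<^sub>v v)" .
  moreover have "vnorm v \<noteq> 0"
    using vnorm_eq_zeroD[of v] v(2) carrier_vecD[OF v(1)] by metis
  ultimately have "opnorm (F_op (- t) H) * vnorm (F_op t H *\<^sub>v v) > 0"
    using vnorm_nonneg[of v] by linarith
  then show ?thesis
    using vnorm_nonneg[of "F_op t H *\<^sub>v v"] by (cases "vnorm (F_op t H *\<^sub>v v) = 0") auto
qed

lemma smult_mult_mat_vec:
  assumes "A \<in> carrier_mat nr nc" "v \<in> carrier_vec nc"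
  shows "(k \<cdot>\<^sub>m A) *\<^sub>v v = k \<cdot>\<^sub>v (A *\<^sub>v v)"
  using assms by (intro eq_vecI) (auto simp: scalar_prod_def sum_distrib_left mult_ac)

text \<open>No hypothesis on \<open>\<Psi>\<close> is needed: if \<open>F\<^sub>b(H) \<Psi> = 0\<close>, both sides vanish (\<open>c / 0 = 0\<close>).\<close>
lemma smult_F_op_mult_normalize_vec:
  assumes H: "H \<in> carrier_mat n n" and \<Psi>: "\<Psi> \<in> carrier_vec n"
  shows "(complex_of_real c \<cdot>\<^sub>m F_op d H) *\<^sub>v normalize_vec (F_op b H *\<^sub>v \<Psi>)
    = complex_of_real (c / vnorm (F_op b H *\<^sub>v \<Psi>)) \<cdot>\<^sub>v (F_op (b + d) H *\<^sub>v \<Psi>)"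
proof -
  let ?g = "F_op b H *\<^sub>v \<Psi>"
  have g: "?g \<in> carrier_vec n"
    using F_op_carrier[OF H] \<Psi> by (rule mult_mat_vec_carrier)
  have "F_op d H *\<^sub>v ?g = (F_op d H * F_op b H) *\<^sub>v \<Psi>"
    by (rule assoc_mult_mat_vec[symmetric, OF F_op_carrier[OF H] F_op_carrier[OF H] \<Psi>])
  also have "\<dots> = F_op (b + d) H *\<^sub>v \<Psi>"
    by (simp add: F_op_add[OF H] add.commute)
  finally have step: "F_op d H *\<^sub>v ?g = F_op (b + d) H *\<^sub>v \<Psi>" .
  have "(complex_of_real c \<cdot>\<^sub>m F_op d H) *\<^sub>v (complex_of_real (1 / vnorm ?g) \<cdot>\<^sub>v ?g)
      = complex_of_real c \<cdot>\<^sub>v (F_op d H *\<^sub>v (complex_of_real (1 / vnorm ?g) \<cdot>\<^sub>v ?g))"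
    using F_op_carrier[OF H] g by (intro smult_mult_mat_vec) auto
  also have "\<dots> = complex_of_real c \<cdot>\<^sub>v (complex_of_real (1 / vnorm ?g) \<cdot>\<^sub>v (F_op d H *\<^sub>v ?g))"
    by (simp only: mult_mat_vec[OF F_op_carrier[OF H] g])
  also have "\<dots> = complex_of_real (c / vnorm ?g) \<cdot>\<^sub>v (F_op (b + d) H *\<^sub>v \<Psi>)"
    by (simp add: step smult_smult_assoc)
  finally show ?thesis
    unfolding normalize_vec_def .
qed

lemma vnorm_normalize_perturbed_le:
  assumes A: "A \<in> carrier_mat n n" and B: "B \<in> carrier_mat n n"
    and p: "p \<in> carrier_vec n" "vnorm p \<le> 1" and \<xi>: "\<xi> \<in> carrier_vec n"
    and contraction: "vnorm (B *\<^sub>v \<xi>) \<le> vnorm \<xi>" and Ap: "vnorm (A *\<^sub>v p) > 0"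
  shows "vnorm (normalize_vec (B *\<^sub>v (p + \<xi>)) - normalize_vec (A *\<^sub>v p))
    \<le> 2 * (vnorm \<xi> + opnorm (B - A)) / vnorm (A *\<^sub>v p)"
proof -
  have split: "B *\<^sub>v (p + \<xi>) - A *\<^sub>v p = (B - A) *\<^sub>v p + B *\<^sub>v \<xi>"
    using A B p \<xi> by (intro eq_vecI) (auto simp: mult_add_distrib_mat_vec minus_mult_distrib_mat_vec)
  have "vnorm ((B - A) *\<^sub>v p) \<le> opnorm (B - A) * vnorm p"
    using vnorm_mult_mat_vec_le[of p "B - A"] A p by simp
  also have "\<dots> \<le> opnorm (B - A)"
    using p(2) opnorm_nonneg by (rule mult_left_le)
  finally have "vnorm ((B - A) *\<^sub>v p) \<le> opnorm (B - A)" .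
  then have "vnorm (B *\<^sub>v (p + \<xi>) - A *\<^sub>v p) \<le> vnorm \<xi> + opnorm (B - A)"
    unfolding split using vnorm_add_le[of "(B - A) *\<^sub>v p" "B *\<^sub>v \<xi>"] contraction A B by simp
  moreover have "vnorm (normalize_vec (B *\<^sub>v (p + \<xi>)) - normalize_vec (A *\<^sub>v p))
      \<le> 2 * vnorm (B *\<^sub>v (p + \<xi>) - A *\<^sub>v p) / vnorm (A *\<^sub>v p)"
    using A B Ap by (intro vnorm_normalize_vec_diff_le) auto
  ultimately show ?thesis
    using Ap by (smt (verit) divide_right_mono)
qed

lemma vnorm_post_selection_error_le:
  assumes H: "H \<in> carrier_mat n n" and \<Psi>: "\<Psi> \<in> carrier_vec n" "\<Psi> \<noteq> 0\<^sub>v n" and \<alpha>: "\<alpha> > 0"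
    and \<Xi>: "\<Xi> \<in> carrier_vec n" and \<phi>: "\<phi> \<in> carrier_vec m" "vnorm \<phi> = 1"
    and U: "U \<in> carrier_mat (n * m) (n * m)" "unitary_mat U"
    and small: "vnorm \<Xi> + opnorm (anc_block n m \<phi> U - complex_of_real \<alpha> \<cdot>\<^sub>m F_op d H)
      \<le> \<epsilon> * vnorm ((complex_of_real \<alpha> \<cdot>\<^sub>m F_op d H) *\<^sub>v normalize_vec (F_op b H *\<^sub>v \<Psi>)) / 2"
  shows "vnorm (normalize_vec (anc_block n m \<phi> U *\<^sub>v (normalize_vec (F_op b H *\<^sub>v \<Psi>) + \<Xi>))
      - normalize_vec (F_op (b + d) H *\<^sub>v \<Psi>)) \<le> \<epsilon>"
proof -
  define A where "A = complex_of_real \<alpha> \<cdot>\<^sub>m F_op d H"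
  define B where "B = anc_block n m \<phi> U"
  define p where "p = normalize_vec (F_op b H *\<^sub>v \<Psi>)"
  have A_carrier: "A \<in> carrier_mat n n"
    unfolding A_def using F_op_carrier[OF H] by (rule smult_carrier_mat)
  have B_carrier: "B \<in> carrier_mat n n"
    unfolding B_def anc_block_def by simp
  have "F_op b H *\<^sub>v \<Psi> \<in> carrier_vec n"
    using F_op_carrier[OF H] \<Psi>(1) by (rule mult_mat_vec_carrier)
  then have p_carrier: "p \<in> carrier_vec n"
    unfolding p_def by (simp add: normalize_vec_def)
  have p_le: "vnorm p \<le> 1"
    unfolding p_def by (rule vnorm_normalize_vec_le)
  have Ap: "A *\<^sub>v p = complex_of_real (\<alpha> / vnorm (F_op b H *\<^sub>v \<Psi>)) \<cdot>\<^sub>v (F_op (b + d) H *\<^sub>v \<Psi>)"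
    unfolding A_def p_def by (rule smult_F_op_mult_normalize_vec[OF H \<Psi>(1)])
  have scale: "\<alpha> / vnorm (F_op b H *\<^sub>v \<Psi>) > 0"
    using \<alpha> vnorm_F_op_mult_vec_pos[OF H \<Psi>] by simp
  have Ap_pos: "vnorm (A *\<^sub>v p) > 0"
    unfolding Ap vnorm_smult norm_of_real abs_of_pos[OF scale]
    using scale vnorm_F_op_mult_vec_pos[OF H \<Psi>] by (rule mult_pos_pos)
  have ideal: "normalize_vec (A *\<^sub>v p) = normalize_vec (F_op (b + d) H *\<^sub>v \<Psi>)"
    unfolding Ap by (rule normalize_vec_smult_pos[OF scale])
  have "mat_adjoint U * U = 1\<^sub>m (n * m)"
    using U(2) carrier_matD(1)[OF U(1)] unfolding unitary_mat_def by simp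
  then have contraction: "vnorm (B *\<^sub>v \<Xi>) \<le> vnorm \<Xi>"
    using vnorm_anc_block_mult_vec_le[OF U(1) _ \<phi>(1) \<Xi>] \<phi>(2) unfolding B_def by simp
  have "vnorm (normalize_vec (B *\<^sub>v (p + \<Xi>)) - normalize_vec (A *\<^sub>v p))
      \<le> 2 * (vnorm \<Xi> + opnorm (B - A)) / vnorm (A *\<^sub>v p)"
    by (rule vnorm_normalize_perturbed_le[OF A_carrier B_carrier p_carrier p_le \<Xi>(1) contraction Ap_pos])
  also have "\<dots> \<le> \<epsilon>"
  proof -
    have "2 * (vnorm \<Xi> + opnorm (B - A)) \<le> \<epsilon> * vnorm (A *\<^sub>v p)"
      using small unfolding A_def B_def p_def by simp
    then show ?thesis
      using Ap_pos by (simp add: pos_divide_le_eq)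
  qed
  finally show ?thesis
    unfolding ideal unfolding B_def p_def .
qed

theorem lemma9:
  shows "\<exists>C>0. \<exists>c>0. \<forall>(n::nat) (m::nat) (H::complex mat) (\<Psi>::complex vec)
      (r::nat) (\<Delta>\<beta>::nat \<Rightarrow> real) (\<alpha>::nat \<Rightarrow> real) (l::nat)
      (\<Xi>\<^sub>p::complex vec) (\<phi>::complex vec) (U::complex mat) (\<epsilon>'::real) (\<epsilon>::real).
    let \<beta> = (\<lambda>j. \<Sum>k\<in>{1..j}. \<Delta>\<beta> k);
        \<Psi>\<^sub>p = normalize_vec (F_op (\<beta> (l-1)) H *\<^sub>v \<Psi>);
        \<Psi>\<^sub>l = normalize_vec (F_op (\<beta> l) H *\<^sub>v \<Psi>);
        B = anc_block n m \<phi> U;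
        A = complex_of_real (\<alpha> l) \<cdot>\<^sub>m F_op (\<Delta>\<beta> l) H;
        \<Psi>t\<^sub>l = normalize_vec (B *\<^sub>v (\<Psi>\<^sub>p + \<Xi>\<^sub>p));
        \<Xi>\<^sub>l = \<Psi>t\<^sub>l - \<Psi>\<^sub>l
    in (0 < n \<and> H \<in> carrier_mat n n \<and> hermitian_mat H \<and> opnorm H \<le> 1 \<and>
        \<Psi> \<in> carrier_vec n \<and> vnorm \<Psi> = 1 \<and>
        (\<forall>k\<in>{1..r}. 0 < \<Delta>\<beta> k \<and> 0 < \<alpha> k \<and> \<alpha> k \<le> 1) \<and>
        l \<in> {1..r} \<and> \<Xi>\<^sub>p \<in> carrier_vec n \<and>
        \<phi> \<in> carrier_vec m \<and> vnorm \<phi> = 1 \<and>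
        U \<in> carrier_mat (n*m) (n*m) \<and> unitary_mat U \<and>
        opnorm (B - A) = \<epsilon>' \<and>
        vnorm \<Xi>\<^sub>p + \<epsilon>' \<le> \<epsilon> * vnorm (A *\<^sub>v \<Psi>\<^sub>p) / 2 \<and>
        \<epsilon> \<le> c)
       \<longrightarrow> vnorm \<Xi>\<^sub>l \<le> C * \<epsilon>"
  unfolding Let_def
proof (intro exI[of _ "1::real"] conjI allI impI, simp_all only: zero_less_one, elim conjE, goal_cases)
  case (1 n m H \<Psi> r \<Delta>\<beta> \<alpha> l \<Xi>\<^sub>p \<phi> U \<epsilon>' \<epsilon>)
  have l: "1 \<le> l" "l \<le> r"
    using 1(8) by auto
  then have \<beta>: "(\<Sum>k\<in>{1..l}. \<Delta>\<beta> k) = (\<Sum>k\<in>{1..l - 1}. \<Delta>\<beta> k) + \<Delta>\<beta> l"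
    using sum.cl_ivl_Suc[of \<Delta>\<beta> 1 "l - 1"] by simp
  have \<alpha>: "\<alpha> l > 0"
    using 1(7) l by auto
  have \<Psi>: "\<Psi> \<noteq> 0\<^sub>v n"
    using 1(6) by auto
  show ?case
    unfolding \<beta> mult_1 using 1(14,15)
    by (intro vnorm_post_selection_error_le[OF 1(2,5) \<Psi> \<alpha> 1(9-13)]) simp
qed

end
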